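(* Let $\Omega_{\mathbf H}$ denote the restriction of the 3-form $\Omega(z_1,z_2,z_3)=\langle z_1\times z_2,z_3\rangle$ to the tangent bundle of $\mathbf H^{4,2}$, regarded as a complex-valued 3-form on the almost complex manifold $(\mathbf H^{4,2},\mathbf J)$ and decomposed by type as $\Omega_{\mathbf H}=\theta+\zeta+\bar\zeta+\bar\theta$ with $\theta$ of type $(3,0)$ and $\zeta$ of type $(2,1)$. Then $\theta$ is nowhere vanishing and $\zeta$ is identically zero. In particular $\theta$ trivializes the canonical bundle of $(\mathbf H^{4,2},\mathbf J)$.
   Context: Split octonions: $\mathbb H'$ has basis $1,j,\delta,\epsilon$ with $j^2=-1$, $\delta^2=\epsilon^2=1$, $j\delta=-\delta j=\epsilon$; $\mathbb O'=\mathbb H'\oplus\mathbb H'$ with $(x_1,y_1)\cdot(x_2,y_2)=(x_1x_2-\bar y_2y_1,\ y_2x_1+y_1\bar x_2)$, conjugation $(x,y)\mapsto(\bar x,-y)$, and $\mathrm{Im}(\mathbb O')$ the $(-1)$-eigenspace. For $z_1,z_2\in\mathrm{Im}(\mathbb O')$: $\langle z_1,z_2\rangle=\tfrac12(z_1z_2+\overline{z_1z_2})$, $z_1\times z_2=\tfrac12(z_1z_2-\overline{z_1z_2})$, $\mathbf q(z)=\langle z,z\rangle$ (signature $(4,3)$). $\mathbf H^{4,2}=\{z:\mathbf q(z)=-1\}$, $T_z\mathbf H^{4,2}=z^\perp$, and $\mathbf J_z(w)=z\times w$ is an almost complex structure on $\mathbf H^{4,2}$. *)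

theory Defs
  imports "HOL-Analysis.Analysis"
begin

text \<open>An element a + b j + c delta + d eps of H' is the vector (a,b,c,d) in real^4,
  components accessed as x$1, x$2, x$3, x$4.\<close>

type_synonym hsplit = "real ^ 4"

definition HS :: "real \<Rightarrow> real \<Rightarrow> real \<Rightarrow> real \<Rightarrow> hsplit" where
  "HS a b c d = vector [a, b, c, d]"

text \<open>Multiplication determined bilinearly by j^2 = -1, delta^2 = eps^2 = 1,
  j delta = - delta j = eps (hence j eps = -delta, eps j = delta,
  delta eps = -j, eps delta = j).\<close>

definition hmult :: "hsplit \<Rightarrow> hsplit \<Rightarrow> hsplit" where
  "hmult x y = HS
     (x$1 * y$1 - x$2 * y$2 + x$3 * y$3 + x$4 * y$4)
     (x$1 * y$2 + x$2 * y$1 - x$3 * y$4 + x$4 * y$3)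
     (x$1 * y$3 + x$3 * y$1 - x$2 * y$4 + x$4 * y$2)
     (x$1 * y$4 + x$4 * y$1 + x$2 * y$3 - x$3 * y$2)"

definition hconj :: "hsplit \<Rightarrow> hsplit" where
  "hconj x = HS (x$1) (- x$2) (- x$3) (- x$4)"

section \<open>Split octonions O' = H' + H' (Cayley--Dickson)\<close>

type_synonym osplit = "hsplit \<times> hsplit"

definition omult :: "osplit \<Rightarrow> osplit \<Rightarrow> osplit" where
  "omult z w = (case z of (x1, y1) \<Rightarrow> case w of (x2, y2) \<Rightarrow>
      (hmult x1 x2 - hmult (hconj y2) y1, hmult y2 x1 + hmult y1 (hconj x2)))"

definition oconj :: "osplit \<Rightarrow> osplit" where
  "oconj z = (hconj (fst z), - snd z)"

definition ImO :: "osplit set" where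
  "ImO = {z. oconj z = - z}"

definition oone :: osplit where
  "oone = (HS 1 0 0 0, 0)"

text \<open>The O'-valued expression (1/2)(z1 z2 + conj(z1 z2)) lies in the real line R*1;
  the inner product is the real coefficient of 1.\<close>

definition oinner_el :: "osplit \<Rightarrow> osplit \<Rightarrow> osplit" where
  "oinner_el z1 z2 = (1/2) *\<^sub>R (omult z1 z2 + oconj (omult z1 z2))"

definition oinner :: "osplit \<Rightarrow> osplit \<Rightarrow> real" where
  "oinner z1 z2 = fst (oinner_el z1 z2) $ 1"

definition ocross :: "osplit \<Rightarrow> osplit \<Rightarrow> osplit" where
  "ocross z1 z2 = (1/2) *\<^sub>R (omult z1 z2 - oconj (omult z1 z2))"

definition oq :: "osplit \<Rightarrow> real" where
  "oq z = oinner z z"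

definition H42 :: "osplit set" where
  "H42 = {z \<in> ImO. oq z = -1}"

definition tangentH :: "osplit \<Rightarrow> osplit set" where
  "tangentH z = {w \<in> ImO. oinner z w = 0}"

definition Jstr :: "osplit \<Rightarrow> osplit \<Rightarrow> osplit" where
  "Jstr z w = ocross z w"

definition Omega3 :: "osplit \<Rightarrow> osplit \<Rightarrow> osplit \<Rightarrow> real" where
  "Omega3 z1 z2 z3 = oinner (ocross z1 z2) z3"

text \<open>A complex tangent vector a + i b is represented by the pair (a, b).
  cext is the complex-trilinear extension of a real trilinear form.\<close>

definition cext :: "('v \<Rightarrow> 'v \<Rightarrow> 'v \<Rightarrow> real) \<Rightarrow> 'v \<times> 'v \<Rightarrow> 'v \<times> 'v \<Rightarrow> 'v \<times> 'v \<Rightarrow> complex" where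
  "cext \<omega> p1 p2 p3 = (case p1 of (a1, b1) \<Rightarrow> case p2 of (a2, b2) \<Rightarrow> case p3 of (a3, b3) \<Rightarrow>
      complex_of_real (\<omega> a1 a2 a3)
    + \<i> * complex_of_real (\<omega> b1 a2 a3 + \<omega> a1 b2 a3 + \<omega> a1 a2 b3)
    - complex_of_real (\<omega> b1 b2 a3 + \<omega> b1 a2 b3 + \<omega> a1 b2 b3)
    - \<i> * complex_of_real (\<omega> b1 b2 b3))"

text \<open>(1,0)-part u^{1,0} = (u - i J u)/2 and (0,1)-part u^{0,1} = (u + i J u)/2.\<close>

definition p10 :: "('v::real_vector \<Rightarrow> 'v) \<Rightarrow> 'v \<Rightarrow> 'v \<times> 'v" where
  "p10 J u = ((1/2) *\<^sub>R u, - ((1/2) *\<^sub>R J u))"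

definition p01 :: "('v::real_vector \<Rightarrow> 'v) \<Rightarrow> 'v \<Rightarrow> 'v \<times> 'v" where
  "p01 J u = ((1/2) *\<^sub>R u, (1/2) *\<^sub>R J u)"

definition part30 :: "('v::real_vector \<Rightarrow> 'v \<Rightarrow> 'v \<Rightarrow> real) \<Rightarrow> ('v \<Rightarrow> 'v) \<Rightarrow> 'v \<Rightarrow> 'v \<Rightarrow> 'v \<Rightarrow> complex" where
  "part30 \<omega> J u v w = cext \<omega> (p10 J u) (p10 J v) (p10 J w)"

definition part21 :: "('v::real_vector \<Rightarrow> 'v \<Rightarrow> 'v \<Rightarrow> real) \<Rightarrow> ('v \<Rightarrow> 'v) \<Rightarrow> 'v \<Rightarrow> 'v \<Rightarrow> 'v \<Rightarrow> complex" where
  "part21 \<omega> J u v w =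
      cext \<omega> (p10 J u) (p10 J v) (p01 J w)
    + cext \<omega> (p10 J u) (p01 J v) (p10 J w)
    + cext \<omega> (p01 J u) (p10 J v) (p10 J w)"

definition thetaH :: "osplit \<Rightarrow> osplit \<Rightarrow> osplit \<Rightarrow> osplit \<Rightarrow> complex" where
  "thetaH z = part30 Omega3 (Jstr z)"

definition zetaH :: "osplit \<Rightarrow> osplit \<Rightarrow> osplit \<Rightarrow> osplit \<Rightarrow> complex" where
  "zetaH z = part21 Omega3 (Jstr z)"

end

theory Submission
  imports Defs
begin

text \<open>For \<open>z \<in> H\<^sup>4\<^sup>,\<^sup>2\<close> and imaginary \<open>u, v, w\<close>, the identities of the split-octonion
  cross product express \<open>\<Omega>(z\<times>u,v,w) - \<Omega>(u,z\<times>v,w)\<close> and \<open>\<Omega>(u,z\<times>v,w) - \<Omega>(u,v,z\<times>w)\<close>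
  through inner products with \<open>z\<close>, which vanish on \<open>T\<^sub>zH\<^sup>4\<^sup>,\<^sup>2 = z\<^sup>\<bottom>\<close>. So on the tangent
  space \<open>J = z\<times>-\<close> can be moved freely between the slots of \<open>\<Omega>\<close>, i.e. \<open>\<Omega>\<close> is the real part of a
  \<open>J\<close>-complex-trilinear form: its \<open>(2,1)\<close>-part vanishes and \<open>Re \<theta> = \<Omega>/2\<close>. Finally \<open>\<Omega>\<close> does
  not vanish on \<open>z\<^sup>\<bottom>\<close>: summed over the orthogonal projections of the seven associative triples
  of the standard basis it gives \<open>7 + 3 q(z) = 4\<close>.\<close>

definition trilinear :: "('a::real_vector \<Rightarrow> 'b::real_vector \<Rightarrow> 'c::real_vector \<Rightarrow> real) \<Rightarrow> bool"
  where "trilinear f \<longleftrightarrow>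
    (\<forall>b c. linear (\<lambda>a. f a b c)) \<and> (\<forall>a c. linear (\<lambda>b. f a b c)) \<and> (\<forall>a b. linear (\<lambda>c. f a b c))"

locale J_balanced_form =
  fixes S :: "'v::real_vector set" and J :: "'v \<Rightarrow> 'v" and \<omega> :: "'v \<Rightarrow> 'v \<Rightarrow> 'v \<Rightarrow> real"
  assumes trilinear: "trilinear \<omega>"
    and J_closed: "a \<in> S \<Longrightarrow> J a \<in> S"
    and J_J: "a \<in> S \<Longrightarrow> J (J a) = - a"
    and J_slot12: "a \<in> S \<Longrightarrow> b \<in> S \<Longrightarrow> c \<in> S \<Longrightarrow> \<omega> (J a) b c = \<omega> a (J b) c"
    and J_slot23: "a \<in> S \<Longrightarrow> b \<in> S \<Longrightarrow> c \<in> S \<Longrightarrow> \<omega> a (J b) c = \<omega> a b (J c)"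
begin

lemma scale_slots [simp]:
  "\<omega> (r *\<^sub>R a) b c = r * \<omega> a b c" "\<omega> a (r *\<^sub>R b) c = r * \<omega> a b c"
  "\<omega> a b (r *\<^sub>R c) = r * \<omega> a b c"
  using trilinear linear_scale[of "\<lambda>a. \<omega> a b c"] linear_scale[of "\<lambda>b. \<omega> a b c"]
    linear_scale[of "\<lambda>c. \<omega> a b c"]
  by (simp_all add: trilinear_def)

lemma minus_slots [simp]:
  "\<omega> (- a) b c = - \<omega> a b c" "\<omega> a (- b) c = - \<omega> a b c" "\<omega> a b (- c) = - \<omega> a b c"
  using scale_slots[where r = "-1"] by simp_all

lemma part21_eq_0:
  assumes "u \<in> S" "v \<in> S" "w \<in> S"
  shows "part21 \<omega> J u v w = 0"
  using assms
  by (simp add: part21_def cext_def p10_def p01_def J_slot12 J_slot23 J_closed J_J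
      complex_eq_iff algebra_simps)

lemma Re_part30:
  assumes "u \<in> S" "v \<in> S" "w \<in> S"
  shows "Re (part30 \<omega> J u v w) = \<omega> u v w / 2"
  using assms
  by (simp add: part30_def cext_def p10_def J_slot12 J_slot23 J_closed J_J algebra_simps)

end

lemma HS_nth [simp]:
  "HS a b c d $ 1 = a" "HS a b c d $ 2 = b" "HS a b c d $ 3 = c" "HS a b c d $ 4 = d"
  by (simp_all add: HS_def vector_def)

lemma ImO_iff: "z \<in> ImO \<longleftrightarrow> fst z $ 1 = 0"
  by (cases z) (auto simp: ImO_def oconj_def hconj_def vec_eq_iff forall_4)

lemmas osplit_defs = omult_def hmult_def hconj_def oconj_def oinner_def oinner_el_def ocross_def
  case_prod_beta

lemma oinner_coords:
  "oinner a b =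
     fst a $ 1 * fst b $ 1 - fst a $ 2 * fst b $ 2 + fst a $ 3 * fst b $ 3 + fst a $ 4 * fst b $ 4
   - snd a $ 1 * snd b $ 1 - snd a $ 2 * snd b $ 2 + snd a $ 3 * snd b $ 3 + snd a $ 4 * snd b $ 4"
  by (simp add: osplit_defs algebra_simps)

lemma bilinear_oinner: "bilinear oinner"
  by (auto simp: bilinear_def oinner_coords algebra_simps intro!: linearI)

lemma ocross_coords:
  "ocross a b =
    (HS 0
      (fst a $ 1 * fst b $ 2 + fst a $ 2 * fst b $ 1 - fst a $ 3 * fst b $ 4 + fst a $ 4 * fst b $ 3
       + snd a $ 1 * snd b $ 2 - snd a $ 2 * snd b $ 1 + snd a $ 3 * snd b $ 4 - snd a $ 4 * snd b $ 3)
      (fst a $ 1 * fst b $ 3 - fst a $ 2 * fst b $ 4 + fst a $ 3 * fst b $ 1 + fst a $ 4 * fst b $ 2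
       + snd a $ 1 * snd b $ 3 + snd a $ 2 * snd b $ 4 - snd a $ 3 * snd b $ 1 - snd a $ 4 * snd b $ 2)
      (fst a $ 1 * fst b $ 4 + fst a $ 2 * fst b $ 3 - fst a $ 3 * fst b $ 2 + fst a $ 4 * fst b $ 1
       + snd a $ 1 * snd b $ 4 - snd a $ 2 * snd b $ 3 + snd a $ 3 * snd b $ 2 - snd a $ 4 * snd b $ 1),
     HS
      (fst a $ 1 * snd b $ 1 - fst a $ 2 * snd b $ 2 + fst a $ 3 * snd b $ 3 + fst a $ 4 * snd b $ 4
       + snd a $ 1 * fst b $ 1 + snd a $ 2 * fst b $ 2 - snd a $ 3 * fst b $ 3 - snd a $ 4 * fst b $ 4)
      (fst a $ 1 * snd b $ 2 + fst a $ 2 * snd b $ 1 + fst a $ 3 * snd b $ 4 - fst a $ 4 * snd b $ 3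
       - snd a $ 1 * fst b $ 2 + snd a $ 2 * fst b $ 1 + snd a $ 3 * fst b $ 4 - snd a $ 4 * fst b $ 3)
      (fst a $ 1 * snd b $ 3 + fst a $ 2 * snd b $ 4 + fst a $ 3 * snd b $ 1 - fst a $ 4 * snd b $ 2
       - snd a $ 1 * fst b $ 3 + snd a $ 2 * fst b $ 4 + snd a $ 3 * fst b $ 1 - snd a $ 4 * fst b $ 2)
      (fst a $ 1 * snd b $ 4 - fst a $ 2 * snd b $ 3 + fst a $ 3 * snd b $ 2 + fst a $ 4 * snd b $ 1
       - snd a $ 1 * fst b $ 4 - snd a $ 2 * fst b $ 3 + snd a $ 3 * fst b $ 2 + snd a $ 4 * fst b $ 1))"
  by (simp add: osplit_defs prod_eq_iff vec_eq_iff forall_4 algebra_simps)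

lemma bilinear_ocross: "bilinear ocross"
  by (auto simp: bilinear_def ocross_coords prod_eq_iff vec_eq_iff forall_4 algebra_simps
      intro!: linearI)

lemma trilinear_Omega3: "trilinear Omega3"
proof -
  have cross: "linear (\<lambda>a. ocross a b)" "linear (\<lambda>b. ocross a b)" for a b
    using bilinear_ocross unfolding bilinear_def by blast+
  have inner: "linear (\<lambda>x. oinner x c)" "linear (\<lambda>c. oinner x c)" for x c
    using bilinear_oinner unfolding bilinear_def by blast+
  show ?thesis
    unfolding trilinear_def Omega3_def
    using linear_compose[OF cross(1) inner(1)] linear_compose[OF cross(2) inner(1)] inner(2)
    by (simp add: o_def)
qed

lemma ocross_in_ImO: "ocross a b \<in> ImO"
  by (simp add: ImO_iff ocross_coords)

lemma oinner_ocross_self: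
  assumes "z \<in> ImO" "u \<in> ImO"
  shows "oinner z (ocross z u) = 0"
  using assms by (simp add: ImO_iff ocross_coords oinner_coords algebra_simps)

lemma ocross_ocross_self:
  assumes "z \<in> ImO" "u \<in> ImO"
  shows "ocross z (ocross z u) = oq z *\<^sub>R u - oinner z u *\<^sub>R z"
  using assms
  by (simp add: ImO_iff oq_def ocross_coords oinner_coords prod_eq_iff vec_eq_iff forall_4
      algebra_simps)

lemma Omega3_ocross_slot12:
  assumes "z \<in> ImO" "u \<in> ImO" "v \<in> ImO" "w \<in> ImO"
  shows "Omega3 (ocross z u) v w - Omega3 u (ocross z v) w
    = - oinner z u * oinner v w - oinner z v * oinner u w + 2 * oinner z w * oinner u v"
  unfolding Omega3_def oinner_coords ocross_coords HS_nth fst_conv snd_conv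
    assms[unfolded ImO_iff]
  by algebra

lemma Omega3_ocross_slot23:
  assumes "z \<in> ImO" "u \<in> ImO" "v \<in> ImO" "w \<in> ImO"
  shows "Omega3 u (ocross z v) w - Omega3 u v (ocross z w)
    = 2 * oinner z u * oinner v w - oinner z v * oinner u w - oinner z w * oinner u v"
  unfolding Omega3_def oinner_coords ocross_coords HS_nth fst_conv snd_conv
    assms[unfolded ImO_iff]
  by algebra

lemma H42_tangentH_ImO:
  assumes "z \<in> H42" "u \<in> tangentH z"
  shows "z \<in> ImO" "oq z = -1" "u \<in> ImO" "oinner z u = 0"
  using assms by (simp_all add: H42_def tangentH_def)

lemma Jstr_in_tangentH:
  assumes "z \<in> H42" "u \<in> tangentH z"
  shows "Jstr z u \<in> tangentH z"
  using H42_tangentH_ImO[OF assms] ocross_in_ImO oinner_ocross_self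
  by (simp add: tangentH_def Jstr_def)

lemma Jstr_Jstr:
  assumes "z \<in> H42" "u \<in> tangentH z"
  shows "Jstr z (Jstr z u) = - u"
  using H42_tangentH_ImO[OF assms] ocross_ocross_self by (simp add: Jstr_def)

lemma Omega3_Jstr_slot12:
  assumes "z \<in> H42" "u \<in> tangentH z" "v \<in> tangentH z" "w \<in> tangentH z"
  shows "Omega3 (Jstr z u) v w = Omega3 u (Jstr z v) w"
proof -
  note z = H42_tangentH_ImO[OF assms(1,2)] and v = H42_tangentH_ImO[OF assms(1,3)]
    and w = H42_tangentH_ImO[OF assms(1,4)]
  show ?thesis
    using Omega3_ocross_slot12[OF z(1,3) v(3) w(3)] z(4) v(4) w(4) by (simp add: Jstr_def)
qed

lemma Omega3_Jstr_slot23: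
  assumes "z \<in> H42" "u \<in> tangentH z" "v \<in> tangentH z" "w \<in> tangentH z"
  shows "Omega3 u (Jstr z v) w = Omega3 u v (Jstr z w)"
proof -
  note z = H42_tangentH_ImO[OF assms(1,2)] and v = H42_tangentH_ImO[OF assms(1,3)]
    and w = H42_tangentH_ImO[OF assms(1,4)]
  show ?thesis
    using Omega3_ocross_slot23[OF z(1,3) v(3) w(3)] z(4) v(4) w(4) by (simp add: Jstr_def)
qed

lemma J_balanced_form_tangentH:
  assumes "z \<in> H42"
  shows "J_balanced_form (tangentH z) (Jstr z) Omega3"
  using assms
  by unfold_locales
    (simp_all add: trilinear_Omega3 Jstr_in_tangentH Jstr_Jstr Omega3_Jstr_slot12 Omega3_Jstr_slot23)

definition tangent_proj :: "osplit \<Rightarrow> osplit \<Rightarrow> osplit" where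
  "tangent_proj z a = a + oinner a z *\<^sub>R z"

lemma tangent_proj_in_tangentH:
  assumes "z \<in> H42" "a \<in> ImO"
  shows "tangent_proj z a \<in> tangentH z"
proof -
  have z: "fst z $ 1 = 0" "oq z = -1" and a: "fst a $ 1 = 0"
    using assms by (simp_all add: H42_def ImO_iff)
  have "oinner z (tangent_proj z a) = oinner z a + oinner a z * oq z"
    unfolding tangent_proj_def oq_def oinner_coords by (simp add: algebra_simps)
  also have "\<dots> = 0"
    using z(2) by (simp add: oinner_coords algebra_simps)
  finally show ?thesis
    using z a by (simp add: tangentH_def ImO_iff tangent_proj_def)
qed

text \<open>The seven triples are the associative triples of the basis
  \<open>j, \<delta>, \<epsilon>, (0,1), (0,j), (0,\<delta>), (0,\<epsilon>)\<close> of \<open>Im(O')\<close>; \<open>\<Omega>\<close> is 1 on each of them.\<close>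

lemma Omega3_tangent_proj_sum:
  assumes "z \<in> ImO"
  defines "P \<equiv> tangent_proj z"
  shows "Omega3 (P (HS 0 1 0 0, 0)) (P (HS 0 0 1 0, 0)) (P (HS 0 0 0 1, 0))
       - Omega3 (P (HS 0 1 0 0, 0)) (P (0, HS 1 0 0 0)) (P (0, HS 0 1 0 0))
       - Omega3 (P (HS 0 1 0 0, 0)) (P (0, HS 0 0 1 0)) (P (0, HS 0 0 0 1))
       + Omega3 (P (HS 0 0 1 0, 0)) (P (0, HS 1 0 0 0)) (P (0, HS 0 0 1 0))
       + Omega3 (P (HS 0 0 1 0, 0)) (P (0, HS 0 1 0 0)) (P (0, HS 0 0 0 1))
       + Omega3 (P (HS 0 0 0 1, 0)) (P (0, HS 1 0 0 0)) (P (0, HS 0 0 0 1))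
       - Omega3 (P (HS 0 0 0 1, 0)) (P (0, HS 0 1 0 0)) (P (0, HS 0 0 1 0))
       = 7 + 3 * oq z"
  using assms unfolding ImO_iff
  by (simp add: Omega3_def oq_def tangent_proj_def oinner_coords ocross_coords algebra_simps)

lemma Omega3_nonzero_on_tangentH:
  assumes "z \<in> H42"
  shows "\<exists>u \<in> tangentH z. \<exists>v \<in> tangentH z. \<exists>w \<in> tangentH z. Omega3 u v w \<noteq> 0"
proof (rule ccontr)
  assume "\<not> ?thesis"
  then have "Omega3 (tangent_proj z a) (tangent_proj z b) (tangent_proj z c) = 0"
    if "a \<in> ImO" "b \<in> ImO" "c \<in> ImO" for a b c
    using tangent_proj_in_tangentH[OF assms] that by blast
  then have "7 + 3 * oq z = 0"
    using Omega3_tangent_proj_sum[of z] assms by (simp add: H42_def ImO_iff)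
  then show False
    using assms by (simp add: H42_def)
qed

theorem lemma3p4:
  shows "(\<forall>z \<in> H42. \<exists>u \<in> tangentH z. \<exists>v \<in> tangentH z. \<exists>w \<in> tangentH z.
            thetaH z u v w \<noteq> 0)
       \<and> (\<forall>z \<in> H42. \<forall>u \<in> tangentH z. \<forall>v \<in> tangentH z. \<forall>w \<in> tangentH z.
            zetaH z u v w = 0)"
proof (intro conjI ballI)
  fix z assume z: "z \<in> H42"
  interpret J_balanced_form "tangentH z" "Jstr z" Omega3
    using z by (rule J_balanced_form_tangentH)
  show "\<exists>u \<in> tangentH z. \<exists>v \<in> tangentH z. \<exists>w \<in> tangentH z. thetaH z u v w \<noteq> 0"
  proof -
    obtain u v w where uvw: "u \<in> tangentH z" "v \<in> tangentH z" "w \<in> tangentH z"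
      and "Omega3 u v w \<noteq> 0"
      using Omega3_nonzero_on_tangentH[OF z] by blast
    then have "Re (thetaH z u v w) \<noteq> 0"
      by (simp add: thetaH_def Re_part30)
    then show ?thesis
      using uvw by force
  qed
  show "zetaH z u v w = 0" if "u \<in> tangentH z" "v \<in> tangentH z" "w \<in> tangentH z" for u v w
    using that by (simp add: zetaH_def part21_eq_0)
qed

end
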